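(* Let $n\ge 6$ and let $T$ be a tree on $n$ vertices with maximum degree $n-3$. Then $\rho_{ABC}(T)<\sqrt{n-3.5}$.
   Context: For a simple connected graph $G$ with vertex set $\{v_1,\dots,v_n\}$ and degrees $d_i$, the ABC matrix is $M(G)=(m_{ij})_{n\times n}$ with $m_{ij}=\sqrt{(d_i+d_j-2)/(d_id_j)}$ if $v_iv_j$ is an edge and $m_{ij}=0$ otherwise. The ABC spectral radius $\rho_{ABC}(G)$ is the largest eigenvalue of $M(G)$. (The paper states this for its three trees $T_2,T_3,T_4$, which are exactly the trees on $n$ vertices with maximum degree $n-3$: a vertex of degree $n-3$ together with two further vertices attached either as two leaves at one neighbor, as leaves at two distinct neighbors, or as a path of length two hanging from one neighbor.) *)

theory Defs
  imports "HOL-Analysis.Analysis"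
begin

definition simple_graph :: "('a \<Rightarrow> 'a \<Rightarrow> bool) \<Rightarrow> bool" where
  "simple_graph E \<longleftrightarrow> (\<forall>u v. E u v \<longrightarrow> E v u) \<and> (\<forall>v. \<not> E v v)"

definition connected_graph :: "('a \<Rightarrow> 'a \<Rightarrow> bool) \<Rightarrow> bool" where
  "connected_graph E \<longleftrightarrow> (\<forall>u v. E\<^sup>*\<^sup>* u v)"

definition is_cycle :: "('a \<Rightarrow> 'a \<Rightarrow> bool) \<Rightarrow> 'a list \<Rightarrow> bool" where
  "is_cycle E cs \<longleftrightarrow> length cs \<ge> 3 \<and> distinct cs
     \<and> (\<forall>i. Suc i < length cs \<longrightarrow> E (cs ! i) (cs ! Suc i))
     \<and> E (last cs) (hd cs)"

definition acyclic_graph :: "('a \<Rightarrow> 'a \<Rightarrow> bool) \<Rightarrow> bool" where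
  "acyclic_graph E \<longleftrightarrow> (\<nexists>cs. is_cycle E cs)"

definition is_tree :: "('a \<Rightarrow> 'a \<Rightarrow> bool) \<Rightarrow> bool" where
  "is_tree E \<longleftrightarrow> simple_graph E \<and> connected_graph E \<and> acyclic_graph E"

definition deg :: "('a \<Rightarrow> 'a \<Rightarrow> bool) \<Rightarrow> 'a \<Rightarrow> nat" where
  "deg E v = card {u. E v u}"

definition max_degree :: "('a::finite \<Rightarrow> 'a \<Rightarrow> bool) \<Rightarrow> nat" where
  "max_degree E = Max (range (deg E))"

definition abc_matrix :: "('a::finite \<Rightarrow> 'a \<Rightarrow> bool) \<Rightarrow> real^'a^'a" where
  "abc_matrix E = (\<chi> i j. if E i j
      then sqrt ((real (deg E i) + real (deg E j) - 2) / (real (deg E i) * real (deg E j)))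
      else 0)"

definition real_eigenvalues :: "real^'n^'n \<Rightarrow> real set" where
  "real_eigenvalues A = {c. \<exists>x. x \<noteq> 0 \<and> A *v x = c *\<^sub>R x}"

definition abc_spectral_radius :: "('a::finite \<Rightarrow> 'a \<Rightarrow> bool) \<Rightarrow> real" where
  "abc_spectral_radius E = Max (real_eigenvalues (abc_matrix E))"

end

theory Submission
  imports Defs
begin

(* Let v be a vertex of degree d = n - 3. Acyclicity and connectivity force T to be the star with
   centre v and leaf set N(v), with the two remaining vertices attached either both to one leaf,
   to two different leaves, or as a path of length two at one leaf. For each of these trees a
   positive vector y with M y \<le> t y componentwise, t = sqrt (d - 3/5), is built from the outside
   in so that every row except the centre's holds with equality; the centre's row then reduces
   to a polynomial inequality in d. Comparing an eigenvector x with y at a coordinate maximising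
   |x_i| / y_i shows that every real eigenvalue of the nonnegative matrix M is at most
   t < sqrt (d - 1/2) = sqrt (n - 3.5). The largest eigenvalue exists because M is symmetric:
   a maximiser of the Rayleigh quotient on the unit sphere is an eigenvector. *)

lemma symmetric_matrix_inner_commute:
  fixes A :: "real^'n^'n"
  assumes "transpose A = A"
  shows "inner (A *v x) y = inner x (A *v y)"
  by (metis assms dot_lmul_matrix transpose_matrix_vector)

lemma finite_real_eigenvalues_symmetric:
  fixes A :: "real^'n^'n"
  assumes sym: "transpose A = A"
  shows "finite (real_eigenvalues A)"
proof -
  let ?S = "real_eigenvalues A"
  define f where "f c = (SOME x. x \<noteq> 0 \<and> A *v x = c *\<^sub>R x)" for c
  have f: "f c \<noteq> 0" "A *v f c = c *\<^sub>R f c" if "c \<in> ?S" for c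
    using someI_ex[of "\<lambda>x. x \<noteq> 0 \<and> A *v x = c *\<^sub>R x"] that
    unfolding real_eigenvalues_def f_def by auto
  have orth: "inner (f c1) (f c2) = 0" if "c1 \<in> ?S" "c2 \<in> ?S" "c1 \<noteq> c2" for c1 c2
  proof -
    have "c1 * inner (f c1) (f c2) = inner (A *v f c1) (f c2)" using f(2)[OF that(1)] by simp
    also have "\<dots> = inner (f c1) (A *v f c2)" by (rule symmetric_matrix_inner_commute[OF sym])
    also have "\<dots> = c2 * inner (f c1) (f c2)" using f(2)[OF that(2)] by simp
    finally show ?thesis using that(3) by simp
  qed
  have "inj_on f ?S"
    by (rule inj_onI) (metis orth f(1) inner_eq_zero_iff)
  moreover have "independent (f ` ?S)"
    by (rule pairwise_orthogonal_independent)
      (use orth f(1) in \<open>auto simp: pairwise_def orthogonal_def\<close>)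
  then have "finite (f ` ?S)" using independent_bound by blast
  ultimately show ?thesis using finite_imageD by blast
qed

lemma nonpos_quadratic_linear_coeff_le:
  fixes a b :: real
  assumes "\<And>s. s > 0 \<Longrightarrow> a * s + b * s\<^sup>2 \<le> 0"
  shows "a \<le> 0"
proof (rule ccontr)
  assume "\<not> a \<le> 0"
  define s where "s = a / (2 * (\<bar>b\<bar> + 1))"
  have s: "s > 0" "\<bar>b\<bar> * s \<le> a / 2" using \<open>\<not> a \<le> 0\<close>
    by (auto simp: s_def field_simps)
  have "b * s\<^sup>2 \<ge> - (\<bar>b\<bar> * s\<^sup>2)"
    using mult_right_mono[of "- \<bar>b\<bar>" b "s\<^sup>2"] by simp
  moreover have "\<bar>b\<bar> * s\<^sup>2 \<le> (a / 2) * s"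
    using mult_right_mono[OF s(2), of s] s(1) by (simp add: power2_eq_square mult.assoc)
  moreover have "(a / 2) * s > 0" using s(1) \<open>\<not> a \<le> 0\<close> by simp
  ultimately show False using assms[OF s(1)] by linarith
qed

lemma real_eigenvalues_nonempty_symmetric:
  fixes A :: "real^'n^'n"
  assumes sym: "transpose A = A"
  shows "real_eigenvalues A \<noteq> {}"
proof -
  define q where "q x = inner x (A *v x)" for x :: "real^'n"
  note commute = symmetric_matrix_inner_commute[OF sym]
  have "continuous_on (sphere 0 1) q"
    unfolding q_def by (intro continuous_intros)
  moreover have "sphere (0::real^'n) 1 \<noteq> {}" by simp
  ultimately obtain x where x: "x \<in> sphere 0 1" and max: "\<And>z. z \<in> sphere 0 1 \<Longrightarrow> q z \<le> q x"
    using continuous_attains_sup[OF compact_sphere] by metis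
  define c where "c = q x"
  have Rayleigh: "q z \<le> c * inner z z" for z
  proof (cases "z = 0")
    case False
    then have "q (z /\<^sub>R norm z) \<le> c" using max[of "z /\<^sub>R norm z"] by (simp add: c_def)
    then show ?thesis using False
      by (simp add: q_def matrix_vector_mult_scaleR power2_norm_eq_inner[symmetric]
          field_simps power2_eq_square)
  qed (simp add: q_def)
  define r where "r = A *v x - c *\<^sub>R x"
  \<comment> \<open>moving x in direction r would increase the Rayleigh quotient unless r = 0\<close>
  have rr: "inner r (A *v x) = inner r r + c * inner r x"
    by (simp add: r_def inner_diff_right)
  have "2 * inner r r * s + (q r - c * inner r r) * s\<^sup>2 \<le> 0" if "s > 0" for s
  proof -
    have "q (x + s *\<^sub>R r) = c + 2 * s * inner r (A *v x) + s\<^sup>2 * q r"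
      using commute[of x r] by (simp add: c_def q_def matrix_vector_right_distrib
          matrix_vector_mult_scaleR inner_add inner_commute power2_eq_square algebra_simps)
    moreover have "inner (x + s *\<^sub>R r) (x + s *\<^sub>R r) = 1 + 2 * s * inner r x + s\<^sup>2 * inner r r"
      using x by (simp add: norm_eq_1 inner_add inner_commute power2_eq_square algebra_simps)
    ultimately have "c + 2 * s * (inner r r + c * inner r x) + s\<^sup>2 * q r
        \<le> c * (1 + 2 * s * inner r x + s\<^sup>2 * inner r r)"
      using Rayleigh[of "x + s *\<^sub>R r"] by (simp only: rr)
    then show ?thesis by (simp add: algebra_simps)
  qed
  then have "2 * inner r r \<le> 0"
    by (rule nonpos_quadratic_linear_coeff_le)
  then have "r = 0" using inner_ge_zero[of r] by simp
  then have "A *v x = c *\<^sub>R x" by (simp add: r_def)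
  moreover have "x \<noteq> 0" using x by auto
  ultimately show ?thesis unfolding real_eigenvalues_def by blast
qed

lemma real_eigenvalue_le_of_positive_subeigenvector:
  fixes A :: "real^'n^'n" and y :: "'n \<Rightarrow> real"
  assumes nonneg: "\<And>i j. 0 \<le> A$i$j" and ypos: "\<And>i. 0 < y i"
    and sub: "\<And>i. (\<Sum>j\<in>UNIV. A$i$j * y j) \<le> t * y i"
    and c: "c \<in> real_eigenvalues A"
  shows "c \<le> t"
proof -
  obtain x where "x \<noteq> 0" and ev: "A *v x = c *\<^sub>R x"
    using c unfolding real_eigenvalues_def by blast
  define r where "r j = \<bar>x$j\<bar> / y j" for j
  have "Max (range r) \<in> range r" by (rule Max_in) auto
  then obtain i where i_max: "Max (range r) = r i" by blast
  have i: "r j \<le> r i" for j unfolding i_max[symmetric] by (rule Max_ge) auto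
  obtain j0 where "x$j0 \<noteq> 0" using \<open>x \<noteq> 0\<close> by (metis vec_eq_iff zero_index)
  then have "r j0 > 0" using ypos[of j0] by (simp add: r_def)
  then have "r i > 0" using i[of j0] by linarith
  have bound: "\<bar>x$j\<bar> \<le> r i * y j" for j
    using i[of j] ypos[of j] by (simp add: r_def field_simps)
  have xi: "\<bar>x$i\<bar> = r i * y i" using ypos[of i] by (simp add: r_def)
  have "\<bar>c\<bar> * \<bar>x$i\<bar> = \<bar>\<Sum>j\<in>UNIV. A$i$j * x$j\<bar>"
    using arg_cong[OF ev, of "\<lambda>z. \<bar>z$i\<bar>"] by (simp add: matrix_vector_mult_def abs_mult)
  also have "\<dots> \<le> (\<Sum>j\<in>UNIV. A$i$j * (r i * y j))"
    by (rule order_trans[OF sum_abs sum_mono]) (simp add: abs_mult nonneg mult_left_mono bound)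
  also have "\<dots> = r i * (\<Sum>j\<in>UNIV. A$i$j * y j)"
    by (simp add: sum_distrib_left algebra_simps)
  also have "\<dots> \<le> t * \<bar>x$i\<bar>"
    using mult_left_mono[OF sub[of i], of "r i"] \<open>r i > 0\<close> xi by (simp add: algebra_simps)
  finally have "\<bar>c\<bar> * \<bar>x$i\<bar> \<le> t * \<bar>x$i\<bar>" .
  moreover have "\<bar>x$i\<bar> > 0" using xi \<open>r i > 0\<close> ypos[of i] by simp
  ultimately show ?thesis by simp
qed

lemma Max_real_eigenvalues_le:
  fixes A :: "real^'n^'n" and y :: "'n \<Rightarrow> real"
  assumes "transpose A = A" and "\<And>i j. 0 \<le> A$i$j" and "\<And>i. 0 < y i"
    and "\<And>i. (\<Sum>j\<in>UNIV. A$i$j * y j) \<le> t * y i"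
  shows "Max (real_eigenvalues A) \<le> t"
  using real_eigenvalue_le_of_positive_subeigenvector[OF assms(2-4)]
  by (simp add: Max_le_iff assms(1)
      finite_real_eigenvalues_symmetric real_eigenvalues_nonempty_symmetric)

definition abc_weight :: "nat \<Rightarrow> nat \<Rightarrow> real" where
  "abc_weight p q = sqrt ((real p + real q - 2) / (real p * real q))"

lemma abc_weight_commute: "abc_weight p q = abc_weight q p"
  unfolding abc_weight_def by (simp add: add.commute mult.commute)

lemma abc_weight_1: "abc_weight p 1 = sqrt ((real p - 1) / real p)"
  unfolding abc_weight_def by simp

lemma abc_weight_2: "p \<noteq> 0 \<Longrightarrow> abc_weight p 2 = sqrt (1 / 2)"
  unfolding abc_weight_def by simp

lemma abc_weight_3: "abc_weight p 3 = sqrt ((real p + 1) / (3 * real p))"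
  unfolding abc_weight_def by (simp add: algebra_simps)

lemma abc_matrix_entry:
  "abc_matrix E $ i $ j = (if E i j then abc_weight (deg E i) (deg E j) else 0)"
  unfolding abc_matrix_def abc_weight_def by simp

lemma deg_ge_1: "E i j \<Longrightarrow> deg E (i::'a::finite) \<ge> 1"
  unfolding deg_def by (metis One_nat_def Suc_leI card_gt_0_iff empty_iff finite mem_Collect_eq)

lemma abc_matrix_nonneg:
  fixes E :: "'a::finite \<Rightarrow> 'a \<Rightarrow> bool"
  assumes "\<And>x y. E x y \<Longrightarrow> E y x"
  shows "0 \<le> abc_matrix E $ i $ j"
proof (cases "E i j")
  case True
  then have "deg E i \<ge> 1" "deg E j \<ge> 1" using assms deg_ge_1 by blast+
  then show ?thesis using True by (simp add: abc_matrix_entry abc_weight_def)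
qed (simp add: abc_matrix_entry)

lemma abc_matrix_symmetric:
  fixes E :: "'a::finite \<Rightarrow> 'a \<Rightarrow> bool"
  assumes "\<And>x y. E x y \<Longrightarrow> E y x"
  shows "transpose (abc_matrix E) = abc_matrix E"
  using assms by (auto simp: vec_eq_iff transpose_def abc_matrix_entry abc_weight_commute)

lemma abc_spectral_radius_le:
  fixes E :: "'a::finite \<Rightarrow> 'a \<Rightarrow> bool"
  assumes sym: "\<And>x y. E x y \<Longrightarrow> E y x" and ypos: "\<And>i. 0 < y i"
    and rows: "\<And>i. (\<Sum>j | E i j. abc_weight (deg E i) (deg E j) * y j) \<le> t * y i"
  shows "abc_spectral_radius E \<le> t"
  unfolding abc_spectral_radius_def
proof (rule Max_real_eigenvalues_le[OF abc_matrix_symmetric abc_matrix_nonneg ypos])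
  fix i
  have "(\<Sum>j\<in>UNIV. abc_matrix E $ i $ j * y j)
      = (\<Sum>j\<in>UNIV. if E i j then abc_weight (deg E i) (deg E j) * y j else 0)"
    by (rule sum.cong) (simp_all add: abc_matrix_entry)
  then show "(\<Sum>j\<in>UNIV. abc_matrix E $ i $ j * y j) \<le> t * y i"
    using rows[of i] by (simp add: sum.inter_filter[symmetric])
qed (use sym in blast)+

lemma centre_row_ineq_fork:
  fixes d :: real assumes "d \<ge> 3"
  shows "(d - 1) * ((d - 1) / d) + (d + 1) / (3 * d) * ((d - 3/5) / (d - 3/5 - 4/3)) \<le> d - 3/5"
proof -
  have "0 \<le> d * (5 * (d - 3)\<^sup>2 + 12 * (d - 3) + 1)"
    using assms by (intro mult_nonneg_nonneg add_nonneg_nonneg) auto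
  then have "18 * d\<^sup>2 \<le> 10 * d + 5 * d ^ 3"
    by (simp add: algebra_simps power2_eq_square power3_eq_cube)
  with assms show ?thesis by (simp add: field_simps power2_eq_square power3_eq_cube)
qed

lemma centre_row_ineq_two_pendants:
  fixes d :: real assumes "d \<ge> 3"
  shows "(d - 2) * ((d - 1) / d) + (d - 3/5) / (d - 3/5 - 1/2) \<le> d - 3/5"
proof -
  have "0 \<le> 350 * d * (d - 3) + 40 * d + 550"
    using assms by (intro add_nonneg_nonneg) auto
  then have "1010 * d \<le> 550 + 350 * d\<^sup>2"
    by (simp add: algebra_simps power2_eq_square)
  with assms show ?thesis by (simp add: field_simps power2_eq_square)
qed

lemma centre_row_ineq_pendant_path:
  fixes d :: real assumes "d \<ge> 3"
  shows "(d - 1) * ((d - 1) / d) + (2 * (d - 3/5) - 1) / (2 * (d - 3/5) - 2) / 2 \<le> d - 3/5"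
proof -
  have "0 \<le> 450 * d * (d - 3) + 5 * d + 800"
    using assms by (intro add_nonneg_nonneg) auto
  then have "1345 * d \<le> 800 + 450 * d\<^sup>2"
    by (simp add: algebra_simps power2_eq_square)
  with assms show ?thesis by (simp add: field_simps power2_eq_square)
qed

definition star_plus :: "('a \<Rightarrow> 'a \<Rightarrow> bool) \<Rightarrow> 'a \<Rightarrow> 'a set \<Rightarrow> ('a \<times> 'a) set \<Rightarrow> bool" where
  "star_plus E v N F \<longleftrightarrow>
     (\<forall>x y. E x y \<longleftrightarrow> (x = v \<and> y \<in> N) \<or> (y = v \<and> x \<in> N) \<or> (x, y) \<in> F \<or> (y, x) \<in> F)"

lemma star_plus_symmetric: "star_plus E v N F \<Longrightarrow> E x y \<Longrightarrow> E y x"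
  unfolding star_plus_def by blast

lemma star_plus_neighbours:
  "star_plus E v N F \<Longrightarrow>
    {j. E i j} = (if i = v then N else {}) \<union> (if i \<in> N then {v} else {})
      \<union> {j. (i, j) \<in> F \<or> (j, i) \<in> F}"
  unfolding star_plus_def by auto

lemma sum_eq_sum_subset_plus_constant:
  fixes f :: "'a \<Rightarrow> real"
  assumes "finite A" "B \<subseteq> A" "\<And>j. j \<in> A - B \<Longrightarrow> f j = c"
  shows "sum f A = sum f B + (real (card A) - real (card B)) * c"
proof -
  have "sum f A = sum f (A - B) + sum f B" using assms(2,1) by (rule sum.subset_diff)
  also have "sum f (A - B) = real (card (A - B)) * c" using assms(3) by simp
  also have "card (A - B) = card A - card B"
    using assms(1,2) finite_subset by (blast intro: card_Diff_subset)
  finally show ?thesis using card_mono[OF assms(1,2)] by (simp add: of_nat_diff)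
qed

lemma abc_spectral_radius_fork_le:
  fixes E :: "'a::finite \<Rightarrow> 'a \<Rightarrow> bool"
  assumes E: "star_plus E v N {(u, a), (u, b)}" and "v \<notin> N" and "u \<in> N"
    and "a \<notin> insert v N" and "b \<notin> insert v N" and "a \<noteq> b" and "card N = d" and "d \<ge> 3"
  shows "abc_spectral_radius E \<le> sqrt (real d - 3/5)"
proof -
  have "v \<noteq> a" "v \<noteq> b" using assms(4,5) by auto
  have nbrs: "{j. E v j} = N" "{j. E u j} = {v, a, b}" "{j. E a j} = {u}" "{j. E b j} = {u}"
    "\<And>l. l \<in> N \<Longrightarrow> l \<noteq> u \<Longrightarrow> {j. E l j} = {v}"
    "\<And>i. i \<notin> insert v N \<Longrightarrow> i \<noteq> a \<Longrightarrow> i \<noteq> b \<Longrightarrow> {j. E i j} = {}"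
    using star_plus_neighbours[OF E] assms(2-6) by auto
  have deg: "deg E v = d" "deg E u = 3" "deg E a = 1" "deg E b = 1"
    "\<And>l. l \<in> N \<Longrightarrow> l \<noteq> u \<Longrightarrow> deg E l = 1"
    unfolding deg_def nbrs using assms(6,7) \<open>v \<noteq> a\<close> \<open>v \<noteq> b\<close> by auto
  define T where "T = real d - 3/5"
  define t where "t = sqrt T"
  define m where "m = sqrt ((real d - 1) / real d)"
  define g where "g = sqrt ((real d + 1) / (3 * real d))"
  define k where "k = sqrt (2/3 :: real)"
  have "T > 4/3" "t > 0" "t * t = T" using \<open>d \<ge> 3\<close> by (auto simp: T_def t_def)
  have "m > 0" "m * m = (real d - 1) / real d" "g > 0" "g * g = (real d + 1) / (3 * real d)"
    "k > 0" "k * k = 2/3"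
    using \<open>d \<ge> 3\<close> by (auto simp: m_def g_def k_def real_sqrt_mult[symmetric])
  have w: "abc_weight d 1 = m" "abc_weight 1 d = m" "abc_weight d 3 = g" "abc_weight 3 d = g"
    "abc_weight 3 1 = k" "abc_weight 1 3 = k"
    using \<open>d \<ge> 3\<close> abc_weight_commute abc_weight_1[of d] abc_weight_3[of d] abc_weight_1[of 3]
    by (simp_all add: m_def g_def k_def)
  note w = w w[unfolded One_nat_def] \<comment> \<open>leaf degrees may reach the simplifier as Suc 0\<close>
  define y where "y i = (if i = v then t else if i = u then g * T / (T - 4/3)
      else if i \<in> N then m else if i = a \<or> i = b then k * g * t / (T - 4/3) else 1)" for i
  have y: "y v = t" "y u = g * T / (T - 4/3)"
    "y a = k * g * t / (T - 4/3)" "y b = k * g * t / (T - 4/3)"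
    "\<And>l. l \<in> N \<Longrightarrow> l \<noteq> u \<Longrightarrow> y l = m"
    using assms(2-5) by (auto simp: y_def)
  have ypos: "0 < y i" for i
    using \<open>T > 4/3\<close> \<open>t > 0\<close> \<open>m > 0\<close> \<open>g > 0\<close> \<open>k > 0\<close> by (simp add: y_def)
  define row where "row i = (\<Sum>j | E i j. abc_weight (deg E i) (deg E j) * y j)" for i
  have "row v = (\<Sum>j\<in>{u}. abc_weight d (deg E j) * y j)
      + (real (card N) - real (card {u})) * (m * m)"
    unfolding row_def nbrs deg
    by (rule sum_eq_sum_subset_plus_constant) (use assms(3) in \<open>auto simp: deg y w\<close>)
  also have "\<dots> = (real d - 1) * (m * m) + (g * g) * (T / (T - 4/3))"
    using assms(7) by (simp add: deg y w)
  also have "\<dots> \<le> t * y v"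
    using centre_row_ineq_fork[of "real d"] \<open>d \<ge> 3\<close>
    unfolding \<open>m * m = _\<close> \<open>g * g = _\<close> y \<open>t * t = T\<close> by (simp add: T_def)
  finally have row_v: "row v \<le> t * y v" .
  have "row u = g * t + 2 * (k * k) * g * t / (T - 4/3)"
    using \<open>v \<noteq> a\<close> \<open>v \<noteq> b\<close> \<open>a \<noteq> b\<close> by (simp add: row_def nbrs deg y w algebra_simps)
  also have "\<dots> = t * y u"
    using \<open>T > 4/3\<close> unfolding \<open>k * k = 2/3\<close> y by (simp add: field_simps)
  finally have row_u: "row u = t * y u" .
  have "k * y u = t * y a" "k * y u = t * y b"
    unfolding y \<open>t * t = T\<close>[symmetric] by (simp_all add: ac_simps)
  then have row_ab: "row a = t * y a" "row b = t * y b" by (simp_all add: row_def nbrs deg w)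
  have row_leaf: "row l = t * y l" if "l \<in> N" "l \<noteq> u" for l
    using that by (simp add: row_def nbrs deg y w)
  have row_isolated: "row i = 0" if "i \<notin> insert v N" "i \<noteq> a" "i \<noteq> b" for i
    using that by (simp add: row_def nbrs)
  show ?thesis
    unfolding t_def[symmetric] T_def[symmetric]
  proof (rule abc_spectral_radius_le[OF star_plus_symmetric[OF E] ypos])
    fix i
    consider "i = v" | "i = u" | "i = a" | "i = b" | "i \<in> N" "i \<noteq> u"
      | "i \<notin> insert v N" "i \<noteq> a" "i \<noteq> b"
      by blast
    then show "(\<Sum>j | E i j. abc_weight (deg E i) (deg E j) * y j) \<le> t * y i"
      unfolding row_def[symmetric]
      by cases (use row_v row_u row_ab row_leaf row_isolated ypos[of i] \<open>t > 0\<close> in auto)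
  qed
qed

lemma abc_spectral_radius_two_pendants_le:
  fixes E :: "'a::finite \<Rightarrow> 'a \<Rightarrow> bool"
  assumes E: "star_plus E v N {(u1, a), (u2, b)}" and "v \<notin> N" and "u1 \<in> N" and "u2 \<in> N"
    and "u1 \<noteq> u2" and "a \<notin> insert v N" and "b \<notin> insert v N" and "a \<noteq> b"
    and "card N = d" and "d \<ge> 3"
  shows "abc_spectral_radius E \<le> sqrt (real d - 3/5)"
proof -
  have "v \<noteq> a" "v \<noteq> b" using assms(6,7) by auto
  have nbrs: "{j. E v j} = N" "{j. E u1 j} = {v, a}" "{j. E u2 j} = {v, b}"
    "{j. E a j} = {u1}" "{j. E b j} = {u2}"
    "\<And>l. l \<in> N \<Longrightarrow> l \<noteq> u1 \<Longrightarrow> l \<noteq> u2 \<Longrightarrow> {j. E l j} = {v}"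
    "\<And>i. i \<notin> insert v N \<Longrightarrow> i \<noteq> a \<Longrightarrow> i \<noteq> b \<Longrightarrow> {j. E i j} = {}"
    using star_plus_neighbours[OF E] assms(2-8) by auto
  have deg: "deg E v = d" "deg E u1 = 2" "deg E u2 = 2" "deg E a = 1" "deg E b = 1"
    "\<And>l. l \<in> N \<Longrightarrow> l \<noteq> u1 \<Longrightarrow> l \<noteq> u2 \<Longrightarrow> deg E l = 1"
    unfolding deg_def nbrs using assms(9) \<open>v \<noteq> a\<close> \<open>v \<noteq> b\<close> by auto
  define T where "T = real d - 3/5"
  define t where "t = sqrt T"
  define m where "m = sqrt ((real d - 1) / real d)"
  define h where "h = sqrt (1/2 :: real)"
  have "T > 1/2" "t > 0" "t * t = T" using \<open>d \<ge> 3\<close> by (auto simp: T_def t_def)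
  have "m > 0" "m * m = (real d - 1) / real d" "h > 0" "h * h = 1/2"
    using \<open>d \<ge> 3\<close> by (auto simp: m_def h_def real_sqrt_mult[symmetric])
  have w: "abc_weight d 1 = m" "abc_weight 1 d = m" "abc_weight d 2 = h" "abc_weight 2 d = h"
    "abc_weight 2 1 = h" "abc_weight 1 2 = h"
    using \<open>d \<ge> 3\<close> abc_weight_commute abc_weight_1[of d] abc_weight_2[of d] abc_weight_2[of 1]
    by (simp_all add: m_def h_def)
  note w = w w[unfolded One_nat_def]
  define y where "y i = (if i = v then t else if i = u1 \<or> i = u2 then h * T / (T - 1/2)
      else if i \<in> N then m else if i = a \<or> i = b then t / (2 * T - 1) else 1)" for i
  have y: "y v = t" "y u1 = h * T / (T - 1/2)" "y u2 = h * T / (T - 1/2)"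
    "y a = t / (2 * T - 1)" "y b = t / (2 * T - 1)"
    "\<And>l. l \<in> N \<Longrightarrow> l \<noteq> u1 \<Longrightarrow> l \<noteq> u2 \<Longrightarrow> y l = m"
    using assms(2-7) by (auto simp: y_def)
  have ypos: "0 < y i" for i
    using \<open>T > 1/2\<close> \<open>t > 0\<close> \<open>m > 0\<close> \<open>h > 0\<close> by (simp add: y_def)
  define row where "row i = (\<Sum>j | E i j. abc_weight (deg E i) (deg E j) * y j)" for i
  have "row v = (\<Sum>j\<in>{u1, u2}. abc_weight d (deg E j) * y j)
      + (real (card N) - real (card {u1, u2})) * (m * m)"
    unfolding row_def nbrs deg
    by (rule sum_eq_sum_subset_plus_constant) (use assms(3,4) in \<open>auto simp: deg y w\<close>)
  also have "\<dots> = (real d - 2) * (m * m) + 2 * (h * h) * (T / (T - 1/2))"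
    using assms(5,9) by (simp add: deg y w)
  also have "\<dots> \<le> t * y v"
    using centre_row_ineq_two_pendants[of "real d"] \<open>d \<ge> 3\<close>
    unfolding \<open>m * m = _\<close> \<open>h * h = _\<close> y \<open>t * t = T\<close> by (simp add: T_def)
  finally have row_v: "row v \<le> t * y v" .
  have "h * t + h * (t / (2 * T - 1)) = t * (h * T / (T - 1/2))"
    using \<open>T > 1/2\<close> by (simp add: field_simps)
  then have row_u: "row u1 = t * y u1" "row u2 = t * y u2"
    using \<open>v \<noteq> a\<close> \<open>v \<noteq> b\<close> by (simp_all add: row_def nbrs deg y w)
  have "h * (h * T / (T - 1/2)) = (h * h) * T / (T - 1/2)" by (simp add: mult.assoc)
  also have "\<dots> = t * (t / (2 * T - 1))"
    using \<open>T > 1/2\<close> unfolding \<open>h * h = 1/2\<close> times_divide_eq_right \<open>t * t = T\<close>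
    by (simp add: field_simps)
  finally have row_ab: "row a = t * y a" "row b = t * y b" by (simp_all add: row_def nbrs deg y w)
  have row_leaf: "row l = t * y l" if "l \<in> N" "l \<noteq> u1" "l \<noteq> u2" for l
    using that by (simp add: row_def nbrs deg y w)
  have row_isolated: "row i = 0" if "i \<notin> insert v N" "i \<noteq> a" "i \<noteq> b" for i
    using that by (simp add: row_def nbrs)
  show ?thesis
    unfolding t_def[symmetric] T_def[symmetric]
  proof (rule abc_spectral_radius_le[OF star_plus_symmetric[OF E] ypos])
    fix i
    consider "i = v" | "i = u1" | "i = u2" | "i = a" | "i = b" | "i \<in> N" "i \<noteq> u1" "i \<noteq> u2"
      | "i \<notin> insert v N" "i \<noteq> a" "i \<noteq> b"
      by blast
    then show "(\<Sum>j | E i j. abc_weight (deg E i) (deg E j) * y j) \<le> t * y i"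
      unfolding row_def[symmetric]
      by cases (use row_v row_u row_ab row_leaf row_isolated ypos[of i] \<open>t > 0\<close> in auto)
  qed
qed

lemma abc_spectral_radius_pendant_path_le:
  fixes E :: "'a::finite \<Rightarrow> 'a \<Rightarrow> bool"
  assumes E: "star_plus E v N {(u, a), (a, b)}" and "v \<notin> N" and "u \<in> N"
    and "a \<notin> insert v N" and "b \<notin> insert v N" and "a \<noteq> b" and "card N = d" and "d \<ge> 3"
  shows "abc_spectral_radius E \<le> sqrt (real d - 3/5)"
proof -
  have "v \<noteq> a" "u \<noteq> b" using assms(3-5) by auto
  have nbrs: "{j. E v j} = N" "{j. E u j} = {v, a}" "{j. E a j} = {u, b}" "{j. E b j} = {a}"
    "\<And>l. l \<in> N \<Longrightarrow> l \<noteq> u \<Longrightarrow> {j. E l j} = {v}"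
    "\<And>i. i \<notin> insert v N \<Longrightarrow> i \<noteq> a \<Longrightarrow> i \<noteq> b \<Longrightarrow> {j. E i j} = {}"
    using star_plus_neighbours[OF E] assms(2-6) by auto
  have deg: "deg E v = d" "deg E u = 2" "deg E a = 2" "deg E b = 1"
    "\<And>l. l \<in> N \<Longrightarrow> l \<noteq> u \<Longrightarrow> deg E l = 1"
    unfolding deg_def nbrs using assms(7) \<open>v \<noteq> a\<close> \<open>u \<noteq> b\<close> by auto
  define T where "T = real d - 3/5"
  define t where "t = sqrt T"
  define m where "m = sqrt ((real d - 1) / real d)"
  define h where "h = sqrt (1/2 :: real)"
  have "T > 1" "t > 0" "t * t = T" using \<open>d \<ge> 3\<close> by (auto simp: T_def t_def)
  have "m > 0" "m * m = (real d - 1) / real d" "h > 0" "h * h = 1/2"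
    using \<open>d \<ge> 3\<close> by (auto simp: m_def h_def real_sqrt_mult[symmetric])
  have w: "abc_weight d 1 = m" "abc_weight 1 d = m" "abc_weight d 2 = h" "abc_weight 2 d = h"
    "abc_weight 2 2 = h" "abc_weight 2 1 = h" "abc_weight 1 2 = h"
    using \<open>d \<ge> 3\<close> abc_weight_commute abc_weight_1[of d] abc_weight_2[of d] abc_weight_2[of 1]
      abc_weight_2[of 2]
    by (simp_all add: m_def h_def)
  note w = w w[unfolded One_nat_def]
  define y where "y i = (if i = v then t else if i = u then h * (2 * T - 1) / (2 * T - 2)
      else if i \<in> N then m else if i = a then t / (2 * T - 2)
      else if i = b then h / (2 * T - 2) else 1)" for i
  have y: "y v = t" "y u = h * (2 * T - 1) / (2 * T - 2)" "y a = t / (2 * T - 2)"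
    "y b = h / (2 * T - 2)" "\<And>l. l \<in> N \<Longrightarrow> l \<noteq> u \<Longrightarrow> y l = m"
    using assms(2-6) by (auto simp: y_def)
  have ypos: "0 < y i" for i
    using \<open>T > 1\<close> \<open>t > 0\<close> \<open>m > 0\<close> \<open>h > 0\<close> by (simp add: y_def)
  define row where "row i = (\<Sum>j | E i j. abc_weight (deg E i) (deg E j) * y j)" for i
  have "row v = (\<Sum>j\<in>{u}. abc_weight d (deg E j) * y j)
      + (real (card N) - real (card {u})) * (m * m)"
    unfolding row_def nbrs deg
    by (rule sum_eq_sum_subset_plus_constant) (use assms(3) in \<open>auto simp: deg y w\<close>)
  also have "\<dots> = (real d - 1) * (m * m) + (h * h) * ((2 * T - 1) / (2 * T - 2))"
    using assms(7) by (simp add: deg y w)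
  also have "\<dots> \<le> t * y v"
    using centre_row_ineq_pendant_path[of "real d"] \<open>d \<ge> 3\<close>
    unfolding \<open>m * m = _\<close> \<open>h * h = _\<close> y \<open>t * t = T\<close> by (simp add: T_def)
  finally have row_v: "row v \<le> t * y v" .
  have "h * t + h * (t / (2 * T - 2)) = t * (h * (2 * T - 1) / (2 * T - 2))"
    using \<open>T > 1\<close> by (simp add: field_simps)
  then have row_u: "row u = t * y u" using \<open>v \<noteq> a\<close> by (simp add: row_def nbrs deg y w)
  have "h * (h * (2 * T - 1) / (2 * T - 2)) + h * (h / (2 * T - 2))
      = ((h * h) * (2 * T - 1) + h * h) / (2 * T - 2)"
    by (simp add: mult.assoc add_divide_distrib)
  also have "\<dots> = t * (t / (2 * T - 2))"
    unfolding \<open>h * h = 1/2\<close> times_divide_eq_right \<open>t * t = T\<close> by (simp add: algebra_simps)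
  finally have row_a: "row a = t * y a" using \<open>u \<noteq> b\<close> by (simp add: row_def nbrs deg y w)
  have row_b: "row b = t * y b" by (simp add: row_def nbrs deg y w)
  have row_leaf: "row l = t * y l" if "l \<in> N" "l \<noteq> u" for l
    using that by (simp add: row_def nbrs deg y w)
  have row_isolated: "row i = 0" if "i \<notin> insert v N" "i \<noteq> a" "i \<noteq> b" for i
    using that by (simp add: row_def nbrs)
  show ?thesis
    unfolding t_def[symmetric] T_def[symmetric]
  proof (rule abc_spectral_radius_le[OF star_plus_symmetric[OF E] ypos])
    fix i
    consider "i = v" | "i = u" | "i = a" | "i = b" | "i \<in> N" "i \<noteq> u"
      | "i \<notin> insert v N" "i \<noteq> a" "i \<noteq> b"
      by blast
    then show "(\<Sum>j | E i j. abc_weight (deg E i) (deg E j) * y j) \<le> t * y i"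
      unfolding row_def[symmetric]
      by cases (use row_v row_u row_a row_b row_leaf row_isolated ypos[of i] \<open>t > 0\<close> in auto)
  qed
qed

lemma is_cycle3I: "E x y \<Longrightarrow> E y z \<Longrightarrow> E z x \<Longrightarrow> distinct [x, y, z] \<Longrightarrow> is_cycle E [x, y, z]"
  unfolding is_cycle_def by (auto simp: less_Suc_eq nth_Cons split: nat.split)

lemma is_cycle4I:
  "E x y \<Longrightarrow> E y z \<Longrightarrow> E z w \<Longrightarrow> E w x \<Longrightarrow> distinct [x, y, z, w] \<Longrightarrow> is_cycle E [x, y, z, w]"
  unfolding is_cycle_def by (auto simp: less_Suc_eq nth_Cons split: nat.split)

lemma is_cycle5I:
  "E x y \<Longrightarrow> E y z \<Longrightarrow> E z w \<Longrightarrow> E w q \<Longrightarrow> E q x \<Longrightarrow> distinct [x, y, z, w, q] \<Longrightarrow>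
    is_cycle E [x, y, z, w, q]"
  unfolding is_cycle_def by (auto simp: less_Suc_eq nth_Cons split: nat.split)

lemma tree_symmetric: "is_tree E \<Longrightarrow> E x y \<Longrightarrow> E y x"
  unfolding is_tree_def simple_graph_def by blast

lemma tree_irreflexive: "is_tree E \<Longrightarrow> \<not> E x x"
  unfolding is_tree_def simple_graph_def by blast

lemma tree_not_cycle: "is_tree E \<Longrightarrow> \<not> is_cycle E cs"
  unfolding is_tree_def acyclic_graph_def by blast

lemma tree_neighbours_not_adjacent:
  assumes "is_tree E" "E v x" "E v y"
  shows "\<not> E x y"
proof
  assume "E x y"
  then have "is_cycle E [v, x, y]"
    using assms tree_symmetric[OF assms(1)] tree_irreflexive[OF assms(1)]
    by (intro is_cycle3I) auto
  then show False using tree_not_cycle assms(1) by blast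
qed

lemma tree_common_neighbours_unique:
  assumes "is_tree E" "x \<noteq> y" "E x u" "E y u" "E x w" "E y w"
  shows "u = w"
proof (rule ccontr)
  assume "u \<noteq> w"
  then have "is_cycle E [x, u, y, w]"
    using assms tree_symmetric[OF assms(1)] tree_irreflexive[OF assms(1)]
    by (intro is_cycle4I) auto
  then show False using tree_not_cycle assms(1) by blast
qed

lemma connected_graph_closed_set:
  assumes "connected_graph E" "x \<in> S" "\<And>z w. z \<in> S \<Longrightarrow> E z w \<Longrightarrow> w \<in> S"
  shows "y \<in> S"
proof -
  have "E\<^sup>*\<^sup>* x y" using assms(1) unfolding connected_graph_def by blast
  then show ?thesis by induction (use assms(2,3) in blast)+
qed

lemma star_plusI:
  assumes sym: "\<And>x y. E x y \<Longrightarrow> E y x" and N: "N = {w. E v w}"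
    and NN: "\<And>x y. x \<in> N \<Longrightarrow> y \<in> N \<Longrightarrow> \<not> E x y"
    and cover: "\<And>x. x \<in> insert v N \<or> x \<in> R" and R: "R \<inter> insert v N = {}"
    and F: "F \<subseteq> N \<times> R \<union> R \<times> R"
    and edges_N: "\<And>x w. x \<in> R \<Longrightarrow> w \<in> N \<Longrightarrow> E x w \<longleftrightarrow> (w, x) \<in> F"
    and edges_R: "\<And>x y. x \<in> R \<Longrightarrow> y \<in> R \<Longrightarrow> E x y \<longleftrightarrow> (x, y) \<in> F \<or> (y, x) \<in> F"
  shows "star_plus E v N F"
  unfolding star_plus_def
proof (intro allI)
  fix x y
  have "v \<notin> N" "v \<notin> R" using R N NN by blast+
  show "E x y \<longleftrightarrow> (x = v \<and> y \<in> N) \<or> (y = v \<and> x \<in> N) \<or> (x, y) \<in> F \<or> (y, x) \<in> F"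
    using cover[of x] cover[of y] edges_N[of x y] edges_N[of y x] edges_R[of x y]
      sym[of x y] sym[of y x] NN[of x y] \<open>v \<notin> N\<close> \<open>v \<notin> R\<close> R F N
    by auto
qed

lemma tree_star_plus_cases:
  fixes E :: "'a::finite \<Rightarrow> 'a \<Rightarrow> bool"
  assumes tree: "is_tree E" and N: "N = {w. E v w}" and card: "card N + 3 = CARD('a)"
  obtains (fork) u a b where "u \<in> N" "a \<notin> insert v N" "b \<notin> insert v N" "a \<noteq> b"
      "star_plus E v N {(u, a), (u, b)}"
    | (two_pendants) u1 u2 a b where "u1 \<in> N" "u2 \<in> N" "u1 \<noteq> u2"
      "a \<notin> insert v N" "b \<notin> insert v N" "a \<noteq> b" "star_plus E v N {(u1, a), (u2, b)}"
    | (pendant_path) u a b where "u \<in> N" "a \<notin> insert v N" "b \<notin> insert v N" "a \<noteq> b"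
      "star_plus E v N {(u, a), (a, b)}"
proof -
  note sym = tree_symmetric[OF tree] and irr = tree_irreflexive[OF tree]
  have "v \<notin> N" using irr N by auto
  have "card (UNIV - insert v N) = 2"
    using card \<open>v \<notin> N\<close> by (simp add: card_Diff_subset)
  then obtain a b where R: "UNIV - insert v N = {a, b}" and "a \<noteq> b" by (auto simp: card_2_iff)
  then have a: "a \<notin> insert v N" and b: "b \<notin> insert v N" by auto
  have cover: "x \<in> insert v N \<or> x \<in> {a, b}" for x using R by auto
  have NN: "\<not> E x y" if "x \<in> N" "y \<in> N" for x y
    using tree_neighbours_not_adjacent[OF tree] that N by blast
  have unique: "u1 = u2" if "r \<notin> insert v N" "u1 \<in> N" "u2 \<in> N" "E u1 r" "E u2 r" for r u1 u2
    using tree_common_neighbours_unique[OF tree, of u1 u2 v r] that N sym by blast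
  have connected: "connected_graph E" using tree unfolding is_tree_def by blast
  have star: "star_plus E v N F"
    if "F \<subseteq> N \<times> {a, b} \<union> {a, b} \<times> {a, b}"
      "\<And>x w. x \<in> {a, b} \<Longrightarrow> w \<in> N \<Longrightarrow> E x w \<longleftrightarrow> (w, x) \<in> F"
      "\<And>x y. x \<in> {a, b} \<Longrightarrow> y \<in> {a, b} \<Longrightarrow> E x y \<longleftrightarrow> (x, y) \<in> F \<or> (y, x) \<in> F" for F
    using star_plusI[OF sym N NN cover _ that] a b by blast
  have only_neighbour: "E r w \<longleftrightarrow> w = u" if "r \<notin> insert v N" "u \<in> N" "E u r" "w \<in> N" for r u w
    using unique[OF that(1) that(4) that(2) _ that(3)] that(3) sym by blast
  show ?thesis
  proof (cases "E a b")
    case False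
    have "\<exists>u\<in>N. E u r" if r: "r \<in> {a, b}" for r
    proof -
      obtain y where "E r y"
        using connected_graph_closed_set[OF connected, of r "{r}" v] r a b by blast
      moreover have "y \<notin> {a, b}" using \<open>E r y\<close> r False irr sym by blast
      moreover have "y \<noteq> v" using \<open>E r y\<close> r a b N sym by blast
      ultimately show ?thesis using cover[of y] sym by blast
    qed
    then obtain u1 u2 where u: "u1 \<in> N" "E u1 a" "u2 \<in> N" "E u2 b" by blast
    have "star_plus E v N {(u1, a), (u2, b)}"
      using only_neighbour[OF a u(1,2)] only_neighbour[OF b u(3,4)] False sym irr \<open>a \<noteq> b\<close> u(1,3) a b
      by (intro star) auto
    then show ?thesis using fork two_pendants u a b \<open>a \<noteq> b\<close> by (cases "u1 = u2") auto
  next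
    case True
    have not_both: False if "u1 \<in> N" "E u1 a" "u2 \<in> N" "E u2 b" for u1 u2
    proof (cases "u1 = u2")
      case True
      then show False using tree_neighbours_not_adjacent[OF tree] that \<open>E a b\<close> by blast
    next
      case False
      then have "is_cycle E [v, u1, a, b, u2]"
        using that \<open>E a b\<close> a b \<open>a \<noteq> b\<close> N sym by (intro is_cycle5I) auto
      then show False using tree_not_cycle[OF tree] by blast
    qed
    have "\<exists>u\<in>N. E u a \<or> E u b"
    proof (rule ccontr)
      assume none: "\<not> (\<exists>u\<in>N. E u a \<or> E u b)"
      have "w \<in> {a, b}" if "z \<in> {a, b}" "E z w" for z w
        using that none cover[of w] a b N sym by blast
      then have "v \<in> {a, b}"
        using connected_graph_closed_set[OF connected, of a "{a, b}" v] by blast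
      then show False using a b by blast
    qed
    then obtain u where "u \<in> N" and "E u a \<or> E u b" by blast
    from \<open>E u a \<or> E u b\<close> show ?thesis
    proof
      assume "E u a"
      have "star_plus E v N {(u, a), (a, b)}"
        using only_neighbour[OF a \<open>u \<in> N\<close> \<open>E u a\<close>] not_both[OF \<open>u \<in> N\<close> \<open>E u a\<close>]
          True sym irr \<open>a \<noteq> b\<close> \<open>u \<in> N\<close> a b
        by (intro star) auto
      then show ?thesis using pendant_path \<open>u \<in> N\<close> a b \<open>a \<noteq> b\<close> by blast
    next
      assume "E u b"
      have "star_plus E v N {(u, b), (b, a)}"
        using only_neighbour[OF b \<open>u \<in> N\<close> \<open>E u b\<close>] not_both[of _ u, OF _ _ \<open>u \<in> N\<close> \<open>E u b\<close>]
          True sym irr \<open>a \<noteq> b\<close> \<open>u \<in> N\<close> a b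
        by (intro star) auto
      then show ?thesis using pendant_path \<open>u \<in> N\<close> a b \<open>a \<noteq> b\<close> by blast
    qed
  qed
qed

theorem lemma3p4:
  fixes E :: "'a::finite \<Rightarrow> 'a \<Rightarrow> bool"
  assumes "CARD('a) \<ge> 6"
    and "is_tree E"
    and "max_degree E = CARD('a) - 3"
  shows "abc_spectral_radius E < sqrt (real CARD('a) - 3.5)"
proof -
  define d where "d = CARD('a) - 3"
  have "Max (range (deg E)) \<in> range (deg E)" by (rule Max_in) auto
  then obtain v where "deg E v = d" using assms(3) unfolding max_degree_def d_def by auto
  define N where "N = {w. E v w}"
  have "card N = d" "d \<ge> 3" "card N + 3 = CARD('a)"
    using \<open>deg E v = d\<close> assms(1) unfolding deg_def N_def d_def by auto
  have "v \<notin> N" using tree_irreflexive[OF assms(2)] by (simp add: N_def)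
  have "abc_spectral_radius E \<le> sqrt (real d - 3/5)"
    using assms(2) N_def \<open>card N + 3 = CARD('a)\<close>
  proof (cases rule: tree_star_plus_cases)
    case (fork u a b)
    then show ?thesis
      using abc_spectral_radius_fork_le \<open>v \<notin> N\<close> \<open>card N = d\<close> \<open>d \<ge> 3\<close> by blast
  next
    case (two_pendants u1 u2 a b)
    then show ?thesis
      using abc_spectral_radius_two_pendants_le \<open>v \<notin> N\<close> \<open>card N = d\<close> \<open>d \<ge> 3\<close> by blast
  next
    case (pendant_path u a b)
    then show ?thesis
      using abc_spectral_radius_pendant_path_le \<open>v \<notin> N\<close> \<open>card N = d\<close> \<open>d \<ge> 3\<close> by blast
  qed
  also have "\<dots> < sqrt (real CARD('a) - 3.5)" using assms(1) by (simp add: d_def of_nat_diff)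
  finally show ?thesis .
qed

end
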